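(* Consider octahedra $p=(p_1,\ldots,p_6)\in(\mathbf{R}^3)^6$ with $p_1$ and $p_6$ opposite vertices and equatorial cycle $p_2,p_3,p_4,p_5$ (so the opposite pairs are $\{1,6\},\{2,4\},\{3,5\}$), and the vector field (gradient of the mean volume) $$X_p=\tfrac16\big(\nu(2,3,4,5),\ \nu(1,5,6,3),\ \nu(1,2,6,4),\ \nu(1,3,6,5),\ \nu(1,4,6,2),\ \nu(2,5,4,3)\big).$$ Then every $X$-optimal $p$ is a regular octahedron (with opposite vertex pairs $\{p_1,p_6\},\{p_2,p_4\},\{p_3,p_5\}$).
   Context: Notation: $\nu(i_1,\ldots,i_k)=p_{i_1}\times p_{i_2}+\cdots+p_{i_{k-1}}\times p_{i_k}+p_{i_k}\times p_{i_1}$. A configuration $p\in(\mathbf{R}^3)^n$ (not all points equal) is called $X$-optimal if there exist $q=\mu p+(c,\ldots,c)$ with $\mu>0$, $c\in\mathbf{R}^3$, and a real number $\lambda\neq0$ such that $X_q=\lambda q$. *)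

theory Defs
  imports "HOL-Analysis.Analysis"
begin

text \<open>Configurations of six points in R^3 are functions p :: nat => real^3;
  only the values at indices 1..6 are relevant.\<close>

definition nu :: "(nat \<Rightarrow> real^3) \<Rightarrow> nat list \<Rightarrow> real^3" where
  "nu p is = (\<Sum>j<length is. cross3 (p (is ! j)) (p (is ! ((j + 1) mod length is))))"

definition Xfield :: "(nat \<Rightarrow> real^3) \<Rightarrow> nat \<Rightarrow> real^3" where
  "Xfield p i = (1/6) *\<^sub>R nu p
     (if i = 1 then [2,3,4,5]
      else if i = 2 then [1,5,6,3]
      else if i = 3 then [1,2,6,4]
      else if i = 4 then [1,3,6,5]
      else if i = 5 then [1,4,6,2]
      else if i = 6 then [2,5,4,3]
      else [])"

definition X_optimal :: "(nat \<Rightarrow> real^3) \<Rightarrow> bool" where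
  "X_optimal p \<longleftrightarrow>
     (\<exists>i\<in>{1..6}. \<exists>j\<in>{1..6}. p i \<noteq> p j) \<and>
     (\<exists>\<mu>::real. \<mu> > 0 \<and> (\<exists>c::real^3. \<exists>l::real. l \<noteq> 0 \<and>
        (\<forall>i\<in>{1..6}. Xfield (\<lambda>k. \<mu> *\<^sub>R p k + c) i = l *\<^sub>R (\<mu> *\<^sub>R p i + c))))"

definition regular_octahedron :: "(nat \<Rightarrow> real^3) \<Rightarrow> bool" where
  "regular_octahedron p \<longleftrightarrow>
     (\<exists>c u v w :: real^3.
        norm u > 0 \<and> norm v = norm u \<and> norm w = norm u \<and>
        u \<bullet> v = 0 \<and> u \<bullet> w = 0 \<and> v \<bullet> w = 0 \<and>
        p 1 = c + u \<and> p 6 = c - u \<and>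
        p 2 = c + v \<and> p 4 = c - v \<and>
        p 3 = c + w \<and> p 5 = c - w)"

end

theory Submission
  imports Defs
begin

text \<open>Write \<open>q\<close> for the normalised configuration with \<open>X\<^sub>q = l q\<close>. The lists defining
  \<open>X\<^sub>6, X\<^sub>4, X\<^sub>5\<close> traverse the same 4-cycles as those of \<open>X\<^sub>1, X\<^sub>2, X\<^sub>3\<close> in the opposite
  direction, so skew-symmetry of the cross product forces opposite vertices to be antipodal:
  \<open>q\<^sub>6 = -q\<^sub>1, q\<^sub>4 = -q\<^sub>2, q\<^sub>5 = -q\<^sub>3\<close>. The eigenvalue equations then collapse to
  \<open>k q\<^sub>1 = q\<^sub>2 \<times> q\<^sub>3\<close>, \<open>k q\<^sub>2 = q\<^sub>3 \<times> q\<^sub>1\<close>, \<open>k q\<^sub>3 = q\<^sub>1 \<times> q\<^sub>2\<close> with \<open>k = 3l/2\<close>. Each vector is thus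
  orthogonal to the other two, and taking norms gives \<open>|k| |q\<^sub>i| = |q\<^sub>j| |q\<^sub>m|\<close>, whose only
  nonzero nonnegative solution is \<open>|q\<^sub>1| = |q\<^sub>2| = |q\<^sub>3| = |k|\<close>.\<close>

lemma nu_four:
  "nu q [a, b, c, d] = cross3 (q a) (q b) + cross3 (q b) (q c) + cross3 (q c) (q d) + cross3 (q d) (q a)"
  unfolding nu_def by (simp add: lessThan_nat_numeral)

lemma nu_four_reverse: "nu q [a, d, c, b] = - nu q [a, b, c, d]"
  unfolding nu_four
  by (simp add: cross_skew[of "q a" "q d"] cross_skew[of "q d" "q c"]
      cross_skew[of "q c" "q b"] cross_skew[of "q b" "q a"] algebra_simps)

lemma nu_four_antipodal:
  assumes "q c = - q a" "q d = - q b"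
  shows "nu q [a, b, c, d] = 4 *\<^sub>R cross3 (q a) (q b)"
  unfolding nu_four assms by (simp add: cross_skew[of "q b" "q a"] vec_eq_iff)

lemma Xfield_eigen_antipodal:
  assumes "l \<noteq> 0" and eigen: "\<And>i. i \<in> {1..6} \<Longrightarrow> Xfield q i = l *\<^sub>R q i"
  shows "q 6 = - q 1" "q 4 = - q 2" "q 5 = - q 3"
proof -
  have opposite: "q j = - q i"
    if "i \<in> {1..6}" "j \<in> {1..6}" "Xfield q j = - Xfield q i" for i j
  proof -
    have "l *\<^sub>R q j = l *\<^sub>R (- q i)"
      using that eigen[of i] eigen[of j] by simp
    with \<open>l \<noteq> 0\<close> show ?thesis by (rule scaleR_left_imp_eq)
  qed
  have "Xfield q 6 = - Xfield q 1" "Xfield q 4 = - Xfield q 2" "Xfield q 5 = - Xfield q 3"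
    unfolding Xfield_def
    using nu_four_reverse[of q 2 3 4 5] nu_four_reverse[of q 1 5 6 3] nu_four_reverse[of q 1 2 6 4]
    by simp_all
  then show "q 6 = - q 1" "q 4 = - q 2" "q 5 = - q 3"
    using opposite[of 1 6] opposite[of 2 4] opposite[of 3 5] by simp_all
qed

lemma Xfield_eigen_cross:
  assumes "l \<noteq> 0" and eigen: "\<And>i. i \<in> {1..6} \<Longrightarrow> Xfield q i = l *\<^sub>R q i"
  shows "(3 * l / 2) *\<^sub>R q 1 = cross3 (q 2) (q 3)"
    and "(3 * l / 2) *\<^sub>R q 2 = cross3 (q 3) (q 1)"
    and "(3 * l / 2) *\<^sub>R q 3 = cross3 (q 1) (q 2)"
proof -
  note antipodal = Xfield_eigen_antipodal[OF assms]
  have scaled: "(3 * l / 2) *\<^sub>R q i = (3 / 2) *\<^sub>R Xfield q i" if "i \<in> {1..6}" for i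
    using eigen[OF that] by simp
  have "Xfield q 1 = (2 / 3) *\<^sub>R cross3 (q 2) (q 3)"
    "Xfield q 2 = (2 / 3) *\<^sub>R cross3 (q 3) (q 1)"
    "Xfield q 3 = (2 / 3) *\<^sub>R cross3 (q 1) (q 2)"
    using antipodal
    by (simp_all add: Xfield_def nu_four_antipodal cross_skew[of "q 3"])
  with scaled[of 1] scaled[of 2] scaled[of 3]
  show "(3 * l / 2) *\<^sub>R q 1 = cross3 (q 2) (q 3)"
    and "(3 * l / 2) *\<^sub>R q 2 = cross3 (q 3) (q 1)"
    and "(3 * l / 2) *\<^sub>R q 3 = cross3 (q 1) (q 2)"
    by simp_all
qed

lemma norm_cross3_orthogonal:
  fixes x y :: "real^3"
  assumes "x \<bullet> y = 0"
  shows "norm (cross3 x y) = norm x * norm y"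
  using norm_cross_dot[of x y] assms
  by (simp add: power_mult_distrib[symmetric] power2_eq_iff_nonneg)

lemma cyclic_products_eq_factor:
  fixes k a b d :: real
  assumes "k > 0" "a \<ge> 0" "b \<ge> 0" "d \<ge> 0" "a \<noteq> 0 \<or> b \<noteq> 0 \<or> d \<noteq> 0"
    and "k * a = b * d" "k * b = d * a" "k * d = a * b"
  shows "a = k \<and> b = k \<and> d = k"
proof -
  have nonzero: "a \<noteq> 0" "b \<noteq> 0" "d \<noteq> 0"
    using assms by (auto simp: mult.commute)
  have "k * a * a = k * b * b"
    using assms(6,7) by (simp add: algebra_simps)
  then have "a = b"
    using assms(1-3) by (simp add: power2_eq_square[symmetric] power2_eq_iff_nonneg)
  moreover have "k * b * b = k * d * d"
    using assms(7,8) by (simp add: algebra_simps)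
  then have "b = d"
    using assms(1,3,4) by (simp add: power2_eq_square[symmetric] power2_eq_iff_nonneg)
  ultimately show ?thesis
    using assms(6) nonzero by auto
qed

lemma cross3_cycle_orthogonal_frame:
  fixes x y z :: "real^3"
  assumes "k \<noteq> 0" "x \<noteq> 0 \<or> y \<noteq> 0 \<or> z \<noteq> 0"
    and x: "k *\<^sub>R x = cross3 y z" and y: "k *\<^sub>R y = cross3 z x" and z: "k *\<^sub>R z = cross3 x y"
  shows "x \<bullet> y = 0" "x \<bullet> z = 0" "y \<bullet> z = 0"
    and "norm x = \<bar>k\<bar>" "norm y = \<bar>k\<bar>" "norm z = \<bar>k\<bar>"
proof -
  have "k * (x \<bullet> y) = 0" "k * (x \<bullet> z) = 0" "k * (y \<bullet> z) = 0"
    using arg_cong[OF x, of "\<lambda>v. v \<bullet> y"] arg_cong[OF x, of "\<lambda>v. v \<bullet> z"]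
      arg_cong[OF y, of "\<lambda>v. v \<bullet> z"]
    by (simp_all add: dot_cross_self inner_commute)
  with \<open>k \<noteq> 0\<close> show xy: "x \<bullet> y = 0" and xz: "x \<bullet> z = 0" and yz: "y \<bullet> z = 0"
    by simp_all
  have "\<bar>k\<bar> * norm x = norm y * norm z"
    "\<bar>k\<bar> * norm y = norm z * norm x"
    "\<bar>k\<bar> * norm z = norm x * norm y"
    using arg_cong[OF x, of norm] arg_cong[OF y, of norm] arg_cong[OF z, of norm]
      norm_cross3_orthogonal[OF yz] norm_cross3_orthogonal[of z x] norm_cross3_orthogonal[OF xy] xz
    by (simp_all add: inner_commute)
  with assms(1,2) show "norm x = \<bar>k\<bar>" "norm y = \<bar>k\<bar>" "norm z = \<bar>k\<bar>"
    using cyclic_products_eq_factor[of "\<bar>k\<bar>" "norm x" "norm y" "norm z"] by auto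
qed

lemma regular_octahedron_rescale:
  fixes p :: "nat \<Rightarrow> real^3"
  assumes "\<mu> > 0" "regular_octahedron (\<lambda>k. \<mu> *\<^sub>R p k + c)"
  shows "regular_octahedron p"
proof -
  obtain c' u v w :: "real^3" where frame: "norm u > 0" "norm v = norm u" "norm w = norm u"
      "u \<bullet> v = 0" "u \<bullet> w = 0" "v \<bullet> w = 0"
    and vertices: "\<mu> *\<^sub>R p 1 + c = c' + u" "\<mu> *\<^sub>R p 6 + c = c' - u"
      "\<mu> *\<^sub>R p 2 + c = c' + v" "\<mu> *\<^sub>R p 4 + c = c' - v"
      "\<mu> *\<^sub>R p 3 + c = c' + w" "\<mu> *\<^sub>R p 5 + c = c' - w"
    using assms(2) unfolding regular_octahedron_def by blast
  have unscale: "p i = (1 / \<mu>) *\<^sub>R (c' - c) + (1 / \<mu>) *\<^sub>R t"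
    if "\<mu> *\<^sub>R p i + c = c' + t" for i t
  proof -
    have "\<mu> *\<^sub>R p i = (c' - c) + t"
      using that by (simp add: algebra_simps)
    then have "(1 / \<mu>) *\<^sub>R (\<mu> *\<^sub>R p i) = (1 / \<mu>) *\<^sub>R ((c' - c) + t)"
      by simp
    with \<open>\<mu> > 0\<close> show ?thesis
      by (simp add: scaleR_right_distrib)
  qed
  show ?thesis
    unfolding regular_octahedron_def
    by (intro exI[of _ "(1 / \<mu>) *\<^sub>R (c' - c)"] exI[of _ "(1 / \<mu>) *\<^sub>R u"]
        exI[of _ "(1 / \<mu>) *\<^sub>R v"] exI[of _ "(1 / \<mu>) *\<^sub>R w"])
      (use frame \<open>\<mu> > 0\<close> unscale[OF vertices(1)] unscale[OF vertices(3)] unscale[OF vertices(5)]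
        unscale[of 6 "- u"] unscale[of 4 "- v"] unscale[of 5 "- w"] vertices(2,4,6)
        in \<open>simp add: scaleR_right_diff_distrib\<close>)
qed

theorem mainTheorem8:
  fixes p :: "nat \<Rightarrow> real^3"
  assumes "X_optimal p"
  shows "regular_octahedron p"
proof -
  obtain i0 j0 where distinct: "i0 \<in> {1..6}" "j0 \<in> {1..6}" "p i0 \<noteq> p j0"
    using assms unfolding X_optimal_def by blast
  obtain \<mu> c l where "\<mu> > 0" "l \<noteq> 0"
    and eigen: "\<forall>i\<in>{1..6}. Xfield (\<lambda>k. \<mu> *\<^sub>R p k + c) i = l *\<^sub>R (\<mu> *\<^sub>R p i + c)"
    using assms unfolding X_optimal_def by blast
  define q where "q = (\<lambda>k. \<mu> *\<^sub>R p k + c)"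
  have eigen_q: "Xfield q i = l *\<^sub>R q i" if "i \<in> {1..6}" for i
    using eigen that unfolding q_def by blast
  note antipodal = Xfield_eigen_antipodal[OF \<open>l \<noteq> 0\<close> eigen_q]
  have nonzero: "q 1 \<noteq> 0 \<or> q 2 \<noteq> 0 \<or> q 3 \<noteq> 0"
  proof (rule ccontr)
    assume "\<not> ?thesis"
    with antipodal have "q i = 0" if "i \<in> {1..6}" for i
      using that by (auto simp: eval_nat_numeral le_Suc_eq)
    with distinct \<open>\<mu> > 0\<close> show False
      unfolding q_def by (metis add_right_cancel scaleR_cancel_left less_irrefl)
  qed
  have "3 * l / 2 \<noteq> 0"
    using \<open>l \<noteq> 0\<close> by simp
  note frame = cross3_cycle_orthogonal_frame[OF this nonzero Xfield_eigen_cross[OF \<open>l \<noteq> 0\<close> eigen_q]]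
  have "\<bar>3 * l / 2\<bar> > 0"
    using \<open>l \<noteq> 0\<close> by simp
  with frame(4) have "norm (q 1) > 0"
    by linarith
  with frame antipodal have "regular_octahedron q"
    unfolding regular_octahedron_def
    by (intro exI[of _ 0] exI[of _ "q 1"] exI[of _ "q 2"] exI[of _ "q 3"]) simp
  with \<open>\<mu> > 0\<close> show ?thesis
    unfolding q_def by (rule regular_octahedron_rescale)
qed

end
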